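(* Let $\alpha>\sqrt2+1$. The expected runtime of the Metropolis algorithm with parameter $\alpha$ on $\mathrm{DLB}:\{0,1\}^n\to\mathbb{R}$ is at most $\frac{n^2}{C(\alpha)}$, where $C(\alpha)=\frac{2}{\alpha}\left(\frac12-2\sum_{k=1}^\infty k\alpha^{-2k}\right)$.
   Context: Let $n$ be an even positive integer. For $x\in\{0,1\}^n$ consider the blocks $(x_{2\ell+1},x_{2\ell+2})$, $\ell=0,\dots,\frac n2-1$. If $x\neq(1,\dots,1)$, let $m$ be the smallest $\ell$ with $x_{2\ell+1}\neq 1$ or $x_{2\ell+2}\neq 1$, and define $\mathrm{DLB}(x)=2m+1$ if $x_{2m+1}+x_{2m+2}=0$ and $\mathrm{DLB}(x)=2m$ if $x_{2m+1}+x_{2m+2}=1$; set $\mathrm{DLB}(1,\dots,1)=n$. The Metropolis algorithm with parameter $\alpha>1$ maximizing $f:\{0,1\}^n\to\mathbb{R}$: choose $x^{(0)}$ uniformly at random in $\{0,1\}^n$. In each iteration $t=1,2,\dots$, choose $i\in[1..n]$ uniformly at random and let $y$ be $x^{(t-1)}$ with the $i$-th bit flipped. If $f(y)\ge f(x^{(t-1)})$ set $x^{(t)}=y$; otherwise set $x^{(t)}=y$ with probability $\alpha^{f(y)-f(x^{(t-1)})}$ and $x^{(t)}=x^{(t-1)}$ otherwise. Each generated search point is evaluated; the runtime is the number of fitness evaluations until (and including) the first evaluation of an optimum of $f$. *)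

theory Defs
  imports "HOL-Probability.Probability"
begin

text \<open>Bit strings of length n are bool lists of length n; bit i (1-based in the paper)
  is entry i-1 of the list.\<close>

definition DLB :: "nat \<Rightarrow> bool list \<Rightarrow> nat" where
  "DLB n x =
     (if (\<forall>l < n div 2. x ! (2*l) \<and> x ! (2*l+1)) then n
      else (let m = (LEAST l. \<not> (x ! (2*l) \<and> x ! (2*l+1)))
            in if \<not> x ! (2*m) \<and> \<not> x ! (2*m+1) then 2*m+1 else 2*m))"

text \<open>One iteration of Metropolis: randomness is a position i (uniform in {0..<n})
  and a real u (uniform in [0,1]); a worsening move is accepted iff u < alpha^(f y - f x),
  which happens with probability alpha^(f y - f x).\<close>

definition metro_step :: "real \<Rightarrow> (bool list \<Rightarrow> real) \<Rightarrow> bool list \<Rightarrow> nat \<times> real \<Rightarrow> bool list" where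
  "metro_step \<alpha> f x r =
     (let y = x[fst r := \<not> x ! fst r]
      in if f y \<ge> f x then y
         else if snd r < \<alpha> powr (f y - f x) then y else x)"

fun metro_traj :: "real \<Rightarrow> (bool list \<Rightarrow> real) \<Rightarrow> bool list \<Rightarrow> (nat \<Rightarrow> nat \<times> real) \<Rightarrow> nat \<Rightarrow> bool list" where
  "metro_traj \<alpha> f x0 \<omega> 0 = x0"
| "metro_traj \<alpha> f x0 \<omega> (Suc t) = metro_step \<alpha> f (metro_traj \<alpha> f x0 \<omega> t) (\<omega> t)"

definition is_optimum :: "nat \<Rightarrow> (bool list \<Rightarrow> real) \<Rightarrow> bool list \<Rightarrow> bool" where
  "is_optimum n f x \<longleftrightarrow> length x = n \<and> (\<forall>z. length z = n \<longrightarrow> f z \<le> f x)"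

text \<open>Runtime = number of fitness evaluations until the first evaluation of an optimum:
  the initial point costs 1 evaluation, each iteration one more; an optimal offspring is
  always accepted, so this is 1 + first time t with x^(t) optimal (infinite if never).\<close>

definition metro_runtime :: "nat \<Rightarrow> real \<Rightarrow> (bool list \<Rightarrow> real) \<Rightarrow> bool list \<Rightarrow> (nat \<Rightarrow> nat \<times> real) \<Rightarrow> ennreal" where
  "metro_runtime n \<alpha> f x0 \<omega> =
     (if \<exists>t. is_optimum n f (metro_traj \<alpha> f x0 \<omega> t)
      then ennreal (1 + real (LEAST t. is_optimum n f (metro_traj \<alpha> f x0 \<omega> t)))
      else \<infinity>)"

definition metro_space :: "nat \<Rightarrow> (bool list \<times> (nat \<Rightarrow> nat \<times> real)) measure" where
  "metro_space n =
     measure_pmf (pmf_of_set {xs :: bool list. length xs = n}) \<Otimes>\<^sub>M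
     (\<Pi>\<^sub>M t\<in>(UNIV :: nat set).
        measure_pmf (pmf_of_set {..<n}) \<Otimes>\<^sub>M uniform_measure lborel {0..1::real})"

definition expected_runtime :: "nat \<Rightarrow> real \<Rightarrow> (bool list \<Rightarrow> real) \<Rightarrow> ennreal" where
  "expected_runtime n \<alpha> f =
     (\<integral>\<^sup>+ \<omega>. metro_runtime n \<alpha> f (fst \<omega>) (snd \<omega>) \<partial>metro_space n)"

definition C_const :: "real \<Rightarrow> real" where
  "C_const \<alpha> = (2 / \<alpha>) * (1/2 - 2 * (\<Sum>k. real (Suc k) * \<alpha> powr (- 2 * real (Suc k))))"

end

theory Submission
  imports Defs
begin

text \<open>
  Away from the optimum let \<open>m\<close> be the first block of \<open>x\<close> that is not \<open>11\<close>, so that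
  \<open>DLB x = 2m + 1\<close> if this block is \<open>00\<close> and \<open>DLB x = 2m\<close> otherwise. Measure progress by the
  potential \<open>g w = w - 1\<close> for odd \<open>w\<close>, \<open>g w = w + 1/2\<close> for even \<open>w < n\<close> and \<open>g n = n\<close>.
  Let \<open>c\<close> be the probability of accepting a move from \<open>DLB x\<close> to \<open>2m\<close>, i.e. \<open>c = 1/\<alpha>\<close> if
  block \<open>m\<close> is \<open>00\<close> and \<open>c = 1\<close> otherwise. The two flips inside block \<open>m\<close> gain at least
  \<open>c\<close> in expectation, flips behind it change nothing, and each of the two flips in block
  \<open>m - d\<close> loses at most \<open>2 d \<alpha>\<^sup>-\<^sup>2\<^sup>d c\<close>. Hence the summed expected gain over all \<open>n\<close>
  positions is at least \<open>c (1 - 4 S) \<ge> (1 - 4 S) / \<alpha> = C(\<alpha>)\<close> with \<open>S = \<Sum> k \<alpha>\<^sup>-\<^sup>2\<^sup>k\<close>, and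
  \<open>4 S < 1\<close> is exactly the condition \<open>\<alpha> > \<surd>2 + 1\<close>. Additive drift bounds the expected
  runtime from \<open>x\<close> by \<open>1 + n (n - g (DLB x)) / C(\<alpha>)\<close>; a uniform start has \<open>E[g] \<ge> 1/4\<close>
  (pair \<open>x\<close> with \<open>x\<close> flipped in its first bit), which absorbs the additive \<open>1\<close>.
\<close>

definition drift_series :: "real \<Rightarrow> real" where
  "drift_series \<alpha> = (\<Sum>k. real (Suc k) * \<alpha> powr (- 2 * real (Suc k)))"

lemma C_const_eq: "C_const \<alpha> = (1 - 4 * drift_series \<alpha>) / \<alpha>"
  unfolding C_const_def drift_series_def by (simp add: diff_divide_distrib)

lemma drift_series_sums:
  fixes \<alpha> :: real
  assumes "\<alpha> > 1"
  shows "(\<lambda>k. real (Suc k) * \<alpha> powr (- 2 * real (Suc k))) sums ((1/\<alpha>^2) / (1 - 1/\<alpha>^2)^2)"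
proof -
  define q where "q = 1/\<alpha>^2"
  have q: "norm q < 1" using assms by (simp add: q_def)
  have "\<alpha> powr (- 2 * real (Suc k)) = q * q ^ k" for k
  proof -
    have "\<alpha> powr (- 2 * real (Suc k)) = inverse (\<alpha> powr (real (2 * Suc k)))"
      by (simp add: powr_minus[symmetric])
    also have "\<dots> = inverse (\<alpha>^2) ^ Suc k"
      using assms by (simp only: powr_realpow power_mult power_inverse)
    finally show ?thesis by (simp add: q_def divide_inverse)
  qed
  moreover have "(\<lambda>k. q * (of_nat (Suc k) * q ^ k)) sums (q * (1 / (1 - q)^2))"
    by (rule sums_mult[OF geometric_deriv_sums[OF q]])
  ultimately show ?thesis by (simp add: q_def[symmetric] algebra_simps)
qed

lemma drift_series_nonneg: "\<alpha> > 1 \<Longrightarrow> 0 \<le> drift_series \<alpha>"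
  unfolding drift_series_def by (rule suminf_nonneg[OF sums_summable[OF drift_series_sums]]) auto

lemma partial_sum_le_drift_series:
  "\<alpha> > 1 \<Longrightarrow> (\<Sum>k<m. real (Suc k) * \<alpha> powr (- 2 * real (Suc k))) \<le> drift_series \<alpha>"
  unfolding drift_series_def by (rule sum_le_suminf[OF sums_summable[OF drift_series_sums]]) auto

lemma drift_series_lt_quarter:
  assumes "\<alpha> > sqrt 2 + 1"
  shows "4 * drift_series \<alpha> < 1"
proof -
  define s where "s = 1 / \<alpha>"
  have sqrt2: "1 < sqrt 2 + 1" by simp
  then have a1: "\<alpha> > 1" using assms by linarith
  then have series: "drift_series \<alpha> = s^2 / (1 - s^2)^2" and s: "0 < s" "s < 1"
    using sums_unique[OF drift_series_sums] by (auto simp: drift_series_def s_def power_one_over)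
  have "0 < \<alpha> * (sqrt 2 + 1)" using a1 sqrt2 by (intro mult_pos_pos) linarith+
  then have "s < 1 / (sqrt 2 + 1)"
    unfolding s_def using assms by (intro divide_strict_left_mono) auto
  also have "\<dots> = sqrt 2 - 1"
  proof -
    have "(sqrt 2 - 1) * (sqrt 2 + 1) = 1" by (simp add: algebra_simps)
    moreover have "sqrt 2 + 1 \<noteq> 0" using sqrt2 by linarith
    ultimately show ?thesis by (simp add: divide_eq_eq)
  qed
  finally have "s < sqrt 2 - 1" .
  then have "(1 + s)^2 < sqrt 2 ^ 2"
    using s by (intro power_strict_mono) auto
  then have "2 * s < 1 - s^2" by (simp add: power2_eq_square algebra_simps)
  then have "(2 * s)^2 < (1 - s^2)^2" using s by (intro power_strict_mono) auto
  moreover have "0 < (1 - s^2)^2"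
    using power_strict_mono[of s 1 2] s by simp
  ultimately show ?thesis unfolding series by (simp add: power_mult_distrib divide_less_eq)
qed

lemma C_const_pos:
  assumes "\<alpha> > sqrt 2 + 1"
  shows "0 < C_const \<alpha>"
proof -
  have "1 < sqrt 2 + 1" by simp
  then have "\<alpha> > 0" using assms by linarith
  then show ?thesis using drift_series_lt_quarter[OF assms] by (simp add: C_const_eq)
qed

lemma C_const_le_inverse: "\<alpha> > 1 \<Longrightarrow> C_const \<alpha> \<le> 1 / \<alpha>"
  using drift_series_nonneg[of \<alpha>] by (simp add: C_const_eq divide_right_mono)

lemma sum_lessThan_double:
  fixes f :: "nat \<Rightarrow> 'a::comm_monoid_add"
  shows "(\<Sum>i<2*m. f i) = (\<Sum>j<m. f (2*j) + f (2*j+1))"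
  by (induction m) (simp_all add: numeral_2_eq_2 add.assoc)

definition flip_at :: "bool list \<Rightarrow> nat \<Rightarrow> bool list" where
  "flip_at x i = x[i := \<not> x ! i]"

definition ones_block :: "bool list \<Rightarrow> nat \<Rightarrow> bool" where
  "ones_block x l \<longleftrightarrow> x ! (2*l) \<and> x ! (2*l+1)"

definition critical_block :: "bool list \<Rightarrow> nat \<Rightarrow> bool" where
  "critical_block x m \<longleftrightarrow> (\<forall>l<m. ones_block x l) \<and> \<not> ones_block x m"

lemma length_flip_at [simp]: "length (flip_at x i) = length x"
  by (simp add: flip_at_def)

lemma nth_flip_at: "k < length x \<Longrightarrow> flip_at x i ! k = (if k = i then \<not> x ! i else x ! k)"
  by (simp add: flip_at_def nth_list_update)

lemma flip_at_flip_at [simp]: "flip_at (flip_at x i) i = x"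
  by (cases "i < length x") (simp_all add: flip_at_def list_update_beyond)

lemma ones_block_flip_at_other: "i div 2 \<noteq> l \<Longrightarrow> ones_block (flip_at x i) l = ones_block x l"
  by (auto simp: ones_block_def flip_at_def)

lemma DLB_ones_block:
  "DLB n x = (if \<forall>l<n div 2. ones_block x l then n
     else let m = LEAST l. \<not> ones_block x l
          in if \<not> x ! (2*m) \<and> \<not> x ! (2*m+1) then 2*m+1 else 2*m)"
  unfolding DLB_def ones_block_def ..

lemma DLB_critical_block:
  assumes "m < n div 2" "critical_block x m"
  shows "DLB n x = (if \<not> x ! (2*m) \<and> \<not> x ! (2*m+1) then 2*m+1 else 2*m)"
proof -
  have "(LEAST l. \<not> ones_block x l) = m"
    using assms(2) unfolding critical_block_def by (intro Least_equality) (auto simp: not_less[symmetric])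
  then show ?thesis using assms unfolding DLB_ones_block critical_block_def by auto
qed

lemma DLB_ge_prefix:
  assumes "m \<le> n div 2" "\<forall>l<m. ones_block x l"
  shows "2*m \<le> DLB n x"
proof (cases "\<forall>l<n div 2. ones_block x l")
  case False
  then have "\<not> ones_block x (LEAST l. \<not> ones_block x l)" by (metis (mono_tags) LeastI)
  then have "m \<le> (LEAST l. \<not> ones_block x l)" using assms(2) by (meson not_le)
  then show ?thesis using False assms(1) unfolding DLB_ones_block Let_def by auto
qed (use assms in \<open>simp add: DLB_ones_block\<close>)

lemma obtain_critical_block:
  assumes "DLB n x \<noteq> n"
  obtains m where "m < n div 2" "critical_block x m"
proof -
  have "\<not> (\<forall>l<n div 2. ones_block x l)"
  proof
    assume "\<forall>l<n div 2. ones_block x l"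
    then show False using assms by (simp add: DLB_ones_block)
  qed
  then obtain l where l: "l < n div 2" "\<not> ones_block x l" by auto
  define m where "m = (LEAST l. \<not> ones_block x l)"
  have "\<not> ones_block x m" unfolding m_def using l(2) by (rule LeastI)
  moreover have "\<forall>l<m. ones_block x l" unfolding m_def using not_less_Least by blast
  ultimately have "critical_block x m" by (simp add: critical_block_def)
  moreover have "m < n div 2"
    unfolding m_def using Least_le[of "\<lambda>l. \<not> ones_block x l", OF l(2)] l(1) by linarith
  ultimately show ?thesis using that by blast
qed

lemma DLB_le: "DLB n x \<le> n"
proof (cases "DLB n x = n")
  case False
  then obtain m where "m < n div 2" "critical_block x m" by (rule obtain_critical_block)
  then show ?thesis using DLB_critical_block[of m n x] by auto
qed simp

lemma DLB_replicate_True: "DLB n (replicate n True) = n"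
  unfolding DLB_ones_block ones_block_def by auto

lemma is_optimum_DLB_iff:
  "is_optimum n (\<lambda>x. real (DLB n x)) x \<longleftrightarrow> length x = n \<and> DLB n x = n"
  unfolding is_optimum_def using DLB_le[of n] DLB_replicate_True[of n]
  by (metis length_replicate of_nat_le_iff order_antisym)

text \<open>
  Shifting odd values down by \<open>1\<close> and even ones up by \<open>1/2\<close> makes the worsening move from
  block \<open>00\<close> to \<open>01\<close> (accepted with probability \<open>1/\<alpha>\<close>) gain potential, while the
  improving move back from \<open>01\<close> to \<open>00\<close> costs only \<open>1/2\<close>.
\<close>

definition potential :: "nat \<Rightarrow> nat \<Rightarrow> real" where
  "potential n w = (if w = n then real n else if odd w then real w - 1 else real w + 1/2)"

lemma potential_nonneg: "w \<le> n \<Longrightarrow> 0 \<le> potential n w"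
  using odd_pos[of w] by (auto simp: potential_def)

lemma potential_le: "w \<le> n \<Longrightarrow> potential n w \<le> n"
  by (auto simp: potential_def)

lemma potential_ge_even:
  assumes "even k" "k \<le> w" "w \<le> n"
  shows "real k \<le> potential n w"
proof -
  have "odd w \<Longrightarrow> k + 1 \<le> w" using assms by (metis Suc_eq_plus1 le_neq_implies_less less_eq_Suc_le)
  then show ?thesis using assms unfolding potential_def by auto
qed

definition accept_prob :: "real \<Rightarrow> real \<Rightarrow> real \<Rightarrow> real" where
  "accept_prob \<alpha> a b = (if a \<le> b then 1 else \<alpha> powr (b - a))"

lemma accept_prob_nonneg: "0 \<le> accept_prob \<alpha> a b"
  by (simp add: accept_prob_def)

lemma accept_prob_le_one: "\<alpha> > 1 \<Longrightarrow> accept_prob \<alpha> a b \<le> 1"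
  by (auto simp: accept_prob_def intro: less_imp_le[OF powr_less_one])

definition potential_gain :: "real \<Rightarrow> nat \<Rightarrow> nat \<Rightarrow> nat \<Rightarrow> real" where
  "potential_gain \<alpha> n v w = accept_prob \<alpha> (real v) (real w) * (potential n w - potential n v)"

lemma potential_gain_to_prefix_ge:
  assumes "\<alpha> > 0" "j < m" "2*m+1 < n" "v = 2*m \<or> v = 2*m+1"
  shows "- 2 * (\<alpha> powr (real (2*m) - real v) * (real (m - j) * \<alpha> powr (- 2 * real (m - j))))
           \<le> potential_gain \<alpha> n v (2*j)"
proof -
  define a where "a = \<alpha> powr (real (2*m) - real v) * \<alpha> powr (- 2 * real (m - j))"
  have "accept_prob \<alpha> (real v) (real (2*j)) = a"
    using assms unfolding a_def by (auto simp: accept_prob_def of_nat_diff simp flip: powr_add)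
  moreover have "a * (- 2 * real (m - j)) \<le> a * (potential n (2*j) - potential n v)"
    using assms unfolding a_def by (intro mult_left_mono) (auto simp: potential_def of_nat_diff)
  ultimately show ?thesis
    unfolding potential_gain_def a_def by (simp add: mult_ac)
qed

context
  fixes n m :: nat and x :: "bool list"
  assumes length_x: "length x = n" and m_less: "m < n div 2" and critical: "critical_block x m"
begin

lemma flip_at_critical_prefix:
  assumes "i div 2 < m"
  shows "DLB n (flip_at x i) = 2 * (i div 2)"
proof -
  define j where "j = i div 2"
  have j: "j < n div 2" "j < m" "i < n" using assms m_less unfolding j_def by auto
  have "critical_block (flip_at x i) j"
    using critical j(2) length_x j(3)
    unfolding critical_block_def by (auto simp: ones_block_flip_at_other ones_block_def nth_flip_at j_def)
  moreover have "x ! (2*j) \<and> x ! (2*j+1)"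
    using critical j(2) unfolding critical_block_def ones_block_def by simp
  ultimately show ?thesis
    using DLB_critical_block[OF j(1)] length_x m_less j by (auto simp: nth_flip_at j_def)
qed

lemma flip_at_critical_suffix:
  assumes "m < i div 2"
  shows "DLB n (flip_at x i) = DLB n x"
proof -
  have "i \<noteq> 2*m" "i \<noteq> 2*m+1" using assms by auto
  then have same: "flip_at x i ! (2*m) = x ! (2*m)" "flip_at x i ! (2*m+1) = x ! (2*m+1)"
    by (simp_all add: flip_at_def)
  have "\<forall>l\<le>m. ones_block (flip_at x i) l = ones_block x l"
    using assms by (simp add: ones_block_flip_at_other)
  then have "critical_block (flip_at x i) m"
    using critical by (simp add: critical_block_def)
  then show ?thesis
    using DLB_critical_block[OF m_less] DLB_critical_block[OF m_less critical] same by simp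
qed

lemma flip_at_critical_zeros:
  assumes "i div 2 = m" "\<not> x ! (2*m)" "\<not> x ! (2*m+1)"
  shows "DLB n (flip_at x i) = 2*m"
proof -
  have "2*m+1 < n" "i = 2*m \<or> i = 2*m+1" using assms m_less by auto
  then have "critical_block (flip_at x i) m" "flip_at x i ! (2*m) \<or> flip_at x i ! (2*m+1)"
    using critical assms length_x unfolding critical_block_def
    by (auto simp: ones_block_flip_at_other ones_block_def nth_flip_at)
  then show ?thesis using DLB_critical_block[OF m_less] by auto
qed

lemma flip_at_critical_one:
  assumes "i div 2 = m" "x ! i"
  shows "DLB n (flip_at x i) = 2*m+1"
proof -
  have "2*m+1 < n" "i = 2*m \<or> i = 2*m+1" using assms m_less by auto
  then have "critical_block (flip_at x i) m" "\<not> flip_at x i ! (2*m)" "\<not> flip_at x i ! (2*m+1)"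
    using critical assms length_x unfolding critical_block_def
    by (auto simp: ones_block_flip_at_other ones_block_def nth_flip_at)
  then show ?thesis using DLB_critical_block[OF m_less] by auto
qed

lemma flip_at_critical_zero:
  assumes "i div 2 = m" "\<not> x ! i" "x ! (2*m) \<or> x ! (2*m+1)"
  shows "2*m+2 \<le> DLB n (flip_at x i)"
proof -
  have "2*m+1 < n" "i = 2*m \<or> i = 2*m+1" using assms m_less by auto
  then have "\<forall>l<Suc m. ones_block (flip_at x i) l"
    using critical assms length_x unfolding critical_block_def
    by (auto simp: ones_block_flip_at_other less_Suc_eq ones_block_def nth_flip_at)
  then show ?thesis using DLB_ge_prefix[of "Suc m" n] m_less by simp
qed

lemma potential_gain_critical_block_ge:
  assumes "\<alpha> > 1"
  defines "v \<equiv> DLB n x"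
  shows "\<alpha> powr (real (2*m) - real v)
           \<le> potential_gain \<alpha> n v (DLB n (flip_at x (2*m))) + potential_gain \<alpha> n v (DLB n (flip_at x (2*m+1)))"
proof (cases "\<not> x ! (2*m) \<and> \<not> x ! (2*m+1)")
  case True
  then have "v = 2*m+1" "DLB n (flip_at x (2*m)) = 2*m" "DLB n (flip_at x (2*m+1)) = 2*m"
    using DLB_critical_block[OF m_less critical] flip_at_critical_zeros
    unfolding v_def by auto
  moreover have "2*m \<noteq> n" "2*m+1 \<noteq> n" using m_less by auto
  ultimately show ?thesis
    using assms by (simp add: potential_gain_def accept_prob_def potential_def)
next
  case False
  then have v: "v = 2*m" using DLB_critical_block[OF m_less critical] unfolding v_def by auto
  have "2*m+1 < n" using m_less by auto
  have gain_one: "potential_gain \<alpha> n v (DLB n (flip_at x i)) = - 1/2" if "i div 2 = m" "x ! i" for i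
    using flip_at_critical_one[OF that] v \<open>2*m+1 < n\<close>
    by (simp add: potential_gain_def accept_prob_def potential_def)
  have gain_zero: "3/2 \<le> potential_gain \<alpha> n v (DLB n (flip_at x i))" if "i div 2 = m" "\<not> x ! i" for i
  proof -
    have w: "2*m+2 \<le> DLB n (flip_at x i)"
      using flip_at_critical_zero[OF that] False by blast
    then have "real (2*m+2) \<le> potential n (DLB n (flip_at x i))"
      by (intro potential_ge_even DLB_le) auto
    then show ?thesis
      using w v \<open>2*m+1 < n\<close> by (simp add: potential_gain_def accept_prob_def potential_def)
  qed
  have "x ! (2*m) \<noteq> x ! (2*m+1)"
    using False critical unfolding critical_block_def ones_block_def by auto
  then show ?thesis
    using gain_one[of "2*m"] gain_one[of "2*m+1"] gain_zero[of "2*m"] gain_zero[of "2*m+1"] v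
    by (cases "x ! (2*m)") auto
qed

lemma potential_gain_prefix_sum_ge:
  assumes "\<alpha> > 1"
  shows "- 4 * \<alpha> powr (real (2*m) - real (DLB n x)) * drift_series \<alpha>
           \<le> (\<Sum>i<2*m. potential_gain \<alpha> n (DLB n x) (DLB n (flip_at x i)))"
proof -
  define v where "v = DLB n x"
  define G where "G i = potential_gain \<alpha> n v (DLB n (flip_at x i))" for i
  define c where "c = \<alpha> powr (real (2*m) - real v)"
  define h where "h d = real d * \<alpha> powr (- 2 * real d)" for d :: nat
  have v: "v = 2*m \<or> v = 2*m+1"
    using DLB_critical_block[OF m_less critical] unfolding v_def by auto
  have pair: "- 4 * (c * h (m - j)) \<le> G (2*j) + G (2*j+1)" if "j < m" for j
  proof -
    have "G (2*j) = potential_gain \<alpha> n v (2*j)" "G (2*j+1) = potential_gain \<alpha> n v (2*j)"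
      using flip_at_critical_prefix[of "2*j"] flip_at_critical_prefix[of "2*j+1"] that
      unfolding G_def by simp_all
    moreover have "- 2 * (c * h (m - j)) \<le> potential_gain \<alpha> n v (2*j)"
      unfolding c_def h_def using assms that m_less v by (intro potential_gain_to_prefix_ge) auto
    ultimately show ?thesis by linarith
  qed
  have reindex: "(\<Sum>j<m. h (m - j)) = (\<Sum>k<m. h (Suc k))"
    using sum.nat_diff_reindex[of "\<lambda>k. h (Suc k)" m] by (simp add: Suc_diff_Suc)
  have "(\<Sum>k<m. h (Suc k)) \<le> drift_series \<alpha>"
    using partial_sum_le_drift_series[OF assms] unfolding h_def .
  then have "- 4 * c * drift_series \<alpha> \<le> - 4 * c * (\<Sum>j<m. h (m - j))"
    unfolding reindex c_def by (intro mult_left_mono_neg) auto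
  also have "\<dots> = (\<Sum>j<m. - 4 * (c * h (m - j)))"
    by (simp add: sum_distrib_left mult.assoc)
  also have "\<dots> \<le> (\<Sum>j<m. G (2*j) + G (2*j+1))"
    by (intro sum_mono pair) simp
  also have "\<dots> = (\<Sum>i<2*m. G i)"
    by (rule sum_lessThan_double[symmetric])
  finally show ?thesis unfolding G_def c_def v_def .
qed

lemma C_const_le_potential_drift:
  assumes "\<alpha> > sqrt 2 + 1"
  shows "C_const \<alpha> \<le> (\<Sum>i<n. potential_gain \<alpha> n (DLB n x) (DLB n (flip_at x i)))"
proof -
  define v where "v = DLB n x"
  define G where "G i = potential_gain \<alpha> n v (DLB n (flip_at x i))" for i
  define c where "c = \<alpha> powr (real (2*m) - real v)"
  define S where "S = drift_series \<alpha>"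
  have "1 < sqrt 2 + 1" by simp
  then have a1: "\<alpha> > 1" using assms by linarith
  have "v = 2*m \<or> v = 2*m+1"
    using DLB_critical_block[OF m_less critical] unfolding v_def by auto
  then have c: "1/\<alpha> \<le> c"
    using a1 unfolding c_def by (auto simp: powr_minus_divide)
  have S: "0 \<le> 1 - 4 * S"
    using drift_series_lt_quarter[OF assms] unfolding S_def by simp
  have "(\<Sum>i<n. G i) = (\<Sum>i<2*m+2. G i)"
  proof (rule sum.mono_neutral_right)
    show "\<forall>i\<in>{..<n} - {..<2*m+2}. G i = 0"
      using flip_at_critical_suffix unfolding G_def v_def potential_gain_def by auto
  qed (use m_less in auto)
  also have "\<dots> = (\<Sum>i<2*m. G i) + (G (2*m) + G (2*m+1))"
    by simp
  finally have split: "(\<Sum>i<n. G i) = (\<Sum>i<2*m. G i) + (G (2*m) + G (2*m+1))" .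
  have "C_const \<alpha> = 1/\<alpha> * (1 - 4 * S)"
    unfolding C_const_eq S_def by simp
  also have "\<dots> \<le> c * (1 - 4 * S)"
    using c S by (rule mult_right_mono)
  also have "\<dots> \<le> (\<Sum>i<n. G i)"
    using split potential_gain_prefix_sum_ge[OF a1] potential_gain_critical_block_ge[OF a1]
    unfolding G_def c_def v_def S_def by (simp add: algebra_simps)
  finally show ?thesis unfolding G_def v_def .
qed

end

definition step_measure :: "nat \<Rightarrow> (nat \<times> real) measure" where
  "step_measure n = measure_pmf (pmf_of_set {..<n}) \<Otimes>\<^sub>M uniform_measure lborel {0..1::real}"

abbreviation step_sequences :: "nat \<Rightarrow> (nat \<Rightarrow> nat \<times> real) measure" where
  "step_sequences n \<equiv> \<Pi>\<^sub>M t\<in>UNIV. step_measure n"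

lemma metro_space_eq_step_sequences:
  "metro_space n = measure_pmf (pmf_of_set {xs. length xs = n}) \<Otimes>\<^sub>M step_sequences n"
  unfolding metro_space_def step_measure_def ..

lemma prob_space_step_measure: "n > 0 \<Longrightarrow> prob_space (step_measure n)"
proof -
  assume "n > 0"
  interpret U: prob_space "uniform_measure lborel {0..1::real}"
    by (rule prob_space_uniform_measure) auto
  interpret P: pair_prob_space "measure_pmf (pmf_of_set {..<n})" "uniform_measure lborel {0..1::real}"
    by unfold_locales
  show ?thesis unfolding step_measure_def by (rule P.prob_space_axioms)
qed

lemma measurable_pmf_pair_countable:
  fixes f :: "'a::countable \<times> 'b \<Rightarrow> 'c"
  assumes "\<And>a. (\<lambda>b. f (a, b)) \<in> measurable N K"
  shows "f \<in> measurable (measure_pmf p \<Otimes>\<^sub>M N) K"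
proof -
  have "f \<in> measurable (count_space UNIV \<Otimes>\<^sub>M N) K"
    by (rule measurable_pair_measure_countable1) (use assms in auto)
  moreover have "sets (measure_pmf p \<Otimes>\<^sub>M N) = sets (count_space UNIV \<Otimes>\<^sub>M N)"
    by (rule sets_pair_measure_cong) auto
  ultimately show ?thesis using measurable_cong_sets by blast
qed

lemma measurable_metro_step:
  "(\<lambda>r. metro_step \<alpha> f x r) \<in> measurable (step_measure n) (count_space UNIV)"
  unfolding step_measure_def
  by (rule measurable_pmf_pair_countable) (unfold metro_step_def Let_def, measurable)

lemma measurable_metro_traj:
  "(\<lambda>\<omega>. metro_traj \<alpha> f x \<omega> t) \<in> measurable (step_sequences n) (count_space UNIV)"
proof (induction t)
  case (Suc t)
  have "(\<lambda>\<omega>. metro_step \<alpha> f y (\<omega> t)) \<in> measurable (step_sequences n) (count_space UNIV)" for y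
    by (rule measurable_compose[OF measurable_component_singleton[of t UNIV] measurable_metro_step]) simp
  then show ?case
    by (simp, rule measurable_compose_countable'[where I=UNIV and f="\<lambda>y \<omega>. metro_step \<alpha> f y (\<omega> t)",
        OF _ Suc countableI_type])
qed simp

definition still_running ::
  "nat \<Rightarrow> real \<Rightarrow> (bool list \<Rightarrow> real) \<Rightarrow> bool list \<Rightarrow> (nat \<Rightarrow> nat \<times> real) \<Rightarrow> nat \<Rightarrow> ennreal" where
  "still_running n \<alpha> f x \<omega> t =
     (if \<forall>s\<le>t. \<not> is_optimum n f (metro_traj \<alpha> f x \<omega> s) then 1 else 0)"

lemma measurable_still_running [measurable]:
  "(\<lambda>\<omega>. still_running n \<alpha> f x \<omega> t) \<in> borel_measurable (step_sequences n)"
proof -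
  have [measurable]: "Measurable.pred (step_sequences n) (\<lambda>\<omega>. is_optimum n f (metro_traj \<alpha> f x \<omega> s))" for s
    by (rule measurable_compose[OF measurable_metro_traj measurable_count_space])
  show ?thesis unfolding still_running_def by measurable
qed

lemma metro_runtime_le_still_running:
  "metro_runtime n \<alpha> f x \<omega> \<le> 1 + (\<Sum>t. still_running n \<alpha> f x \<omega> t)"
proof (cases "\<exists>t. is_optimum n f (metro_traj \<alpha> f x \<omega> t)")
  case True
  define T where "T = (LEAST t. is_optimum n f (metro_traj \<alpha> f x \<omega> t))"
  have "still_running n \<alpha> f x \<omega> t = 1" if "t < T" for t
    using not_less_Least[of _ "\<lambda>t. is_optimum n f (metro_traj \<alpha> f x \<omega> t)"] that
    unfolding still_running_def T_def by force
  then have "of_nat T = (\<Sum>t<T. still_running n \<alpha> f x \<omega> t)" by simp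
  also have "\<dots> \<le> (\<Sum>t. still_running n \<alpha> f x \<omega> t)"
    by (rule sum_le_suminf[OF summableI]) auto
  finally show ?thesis
    using True unfolding metro_runtime_def T_def[symmetric]
    by (simp add: ennreal_of_nat_eq_real_of_nat ennreal_plus add_left_mono)
next
  case False
  then have "still_running n \<alpha> f x \<omega> t = 1" for t unfolding still_running_def by auto
  then have "(\<Sum>t. still_running n \<alpha> f x \<omega> t) = (\<Sum>t. ennreal 1)" by simp
  also have "\<dots> = top"
    using summable_iff_suminf_neq_top[of "\<lambda>_. 1"] by (simp add: summable_const_iff)
  finally show ?thesis by simp
qed

lemma nn_integral_metro_step_uniform:
  assumes "\<alpha> > 1" "0 \<le> h x" "0 \<le> h (flip_at x i)"
  shows "(\<integral>\<^sup>+u. ennreal (h (metro_step \<alpha> f x (i, u))) \<partial>uniform_measure lborel {0..1::real})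
       = ennreal (h x + accept_prob \<alpha> (f x) (f (flip_at x i)) * (h (flip_at x i) - h x))"
proof -
  let ?U = "uniform_measure lborel {0..1::real}"
  interpret U: prob_space ?U by (rule prob_space_uniform_measure) auto
  define y where "y = flip_at x i"
  have step: "metro_step \<alpha> f x (i, u) = (if f x \<le> f y then y else if u < \<alpha> powr (f y - f x) then y else x)" for u
    unfolding metro_step_def y_def flip_at_def Let_def by simp
  show ?thesis
  proof (cases "f x \<le> f y")
    case True
    then show ?thesis by (simp add: step U.emeasure_space_1 accept_prob_def y_def)
  next
    case False
    define p where "p = \<alpha> powr (f y - f x)"
    have p: "0 < p" "p < 1" unfolding p_def using False assms(1) by (auto intro: powr_less_one)
    have "{0..1} \<inter> {..<p} = {0..<p}" "{0..1} \<inter> {p..} = {p..1}" using p by auto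
    then have measures: "emeasure ?U {..<p} = ennreal p" "emeasure ?U {p..} = ennreal (1 - p)"
      using p by (simp_all add: divide_ennreal_def)
    have "(\<integral>\<^sup>+u. ennreal (h (metro_step \<alpha> f x (i, u))) \<partial>?U)
        = (\<integral>\<^sup>+u. ennreal (h y) * indicator {..<p} u + ennreal (h x) * indicator {p..} u \<partial>?U)"
      by (intro nn_integral_cong) (auto simp: step False p_def[symmetric] indicator_def)
    also have "\<dots> = ennreal (h y) * ennreal p + ennreal (h x) * ennreal (1 - p)"
      by (subst nn_integral_add) (auto simp: nn_integral_cmult_indicator measures)
    also have "\<dots> = ennreal (h y * p) + ennreal (h x * (1 - p))"
      using p assms(2,3) by (simp add: y_def ennreal_mult)
    also have "\<dots> = ennreal (h x + p * (h y - h x))"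
      using p assms(2,3) mult_left_le_one_le[of "h x" p]
      by (subst ennreal_plus[symmetric]) (auto simp: y_def algebra_simps)
    finally show ?thesis
      using False by (simp add: accept_prob_def p_def y_def)
  qed
qed

lemma nn_integral_metro_step:
  assumes "n > 0" "\<alpha> > 1" "\<And>y. 0 \<le> h y"
  shows "(\<integral>\<^sup>+r. ennreal (h (metro_step \<alpha> f x r)) \<partial>step_measure n)
       = ennreal (h x - (\<Sum>i<n. accept_prob \<alpha> (f x) (f (flip_at x i)) * (h x - h (flip_at x i))) / n)"
proof -
  let ?U = "uniform_measure lborel {0..1::real}"
  define a where "a i = accept_prob \<alpha> (f x) (f (flip_at x i))" for i
  interpret U: prob_space ?U by (rule prob_space_uniform_measure) auto
  have nonneg: "0 \<le> h x + a i * (h (flip_at x i) - h x)" for i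
  proof -
    have "h x + a i * (h (flip_at x i) - h x) = (1 - a i) * h x + a i * h (flip_at x i)"
      by (simp add: algebra_simps)
    then show ?thesis
      using accept_prob_nonneg accept_prob_le_one[OF assms(2)] assms(3) unfolding a_def by simp
  qed
  have "(\<lambda>r. ennreal (h (metro_step \<alpha> f x r))) \<in> borel_measurable (measure_pmf (pmf_of_set {..<n}) \<Otimes>\<^sub>M ?U)"
    using measurable_compose[OF measurable_metro_step, of "\<lambda>y. ennreal (h y)"] by (simp add: step_measure_def)
  then have "(\<integral>\<^sup>+r. ennreal (h (metro_step \<alpha> f x r)) \<partial>step_measure n)
      = (\<integral>\<^sup>+i. \<integral>\<^sup>+u. ennreal (h (metro_step \<alpha> f x (i, u))) \<partial>?U \<partial>measure_pmf (pmf_of_set {..<n}))"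
    unfolding step_measure_def by (rule U.nn_integral_fst[symmetric])
  also have "\<dots> = (\<integral>\<^sup>+i. ennreal (h x + a i * (h (flip_at x i) - h x)) \<partial>measure_pmf (pmf_of_set {..<n}))"
    unfolding a_def by (intro nn_integral_cong nn_integral_metro_step_uniform assms)
  also have "\<dots> = (\<Sum>i<n. ennreal (h x + a i * (h (flip_at x i) - h x))) / card {..<n}"
    using assms(1) by (subst nn_integral_pmf_of_set) auto
  also have "\<dots> = ennreal (\<Sum>i<n. h x + a i * (h (flip_at x i) - h x)) / ennreal (real n)"
    using nonneg by (subst sum_ennreal) (auto simp: ennreal_of_nat_eq_real_of_nat)
  also have "\<dots> = ennreal ((\<Sum>i<n. h x + a i * (h (flip_at x i) - h x)) / n)"
    using nonneg assms(1) by (intro divide_ennreal) (auto intro: sum_nonneg)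
  also have "(\<Sum>i<n. h x + a i * (h (flip_at x i) - h x)) = n * h x - (\<Sum>i<n. a i * (h x - h (flip_at x i)))"
    by (simp add: sum.distrib sum_subtractf algebra_simps)
  finally show ?thesis
    using assms(1) unfolding a_def by (simp add: diff_divide_distrib)
qed

lemma (in prob_space) nn_integral_PiM_case_nat:
  assumes [measurable]: "F \<in> borel_measurable (\<Pi>\<^sub>M i\<in>UNIV. M)"
  shows "(\<integral>\<^sup>+\<omega>. F \<omega> \<partial>\<Pi>\<^sub>M i\<in>UNIV. M) = (\<integral>\<^sup>+r. \<integral>\<^sup>+\<omega>. F (case_nat r \<omega>) \<partial>\<Pi>\<^sub>M i\<in>UNIV. M \<partial>M)"
proof -
  interpret S: sequence_space M ..
  interpret P: pair_sigma_finite M "\<Pi>\<^sub>M i::nat\<in>UNIV. M" ..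
  have "(\<integral>\<^sup>+\<omega>. F \<omega> \<partial>S.S) = (\<integral>\<^sup>+X. F ((\<lambda>(s, \<omega>). case_nat s \<omega>) X) \<partial>(M \<Otimes>\<^sub>M S.S))"
    by (subst S.PiM_iter[symmetric]) (simp add: nn_integral_distr)
  also have "\<dots> = (\<integral>\<^sup>+r. \<integral>\<^sup>+\<omega>. F ((\<lambda>(s, \<omega>). case_nat s \<omega>) (r, \<omega>)) \<partial>S.S \<partial>M)"
    by (subst S.nn_integral_fst) simp_all
  finally show ?thesis by simp
qed

lemma metro_traj_case_nat:
  "metro_traj \<alpha> f x (case_nat r \<omega>) (Suc t) = metro_traj \<alpha> f (metro_step \<alpha> f x r) \<omega> t"
  by (induction t) auto

lemma sum_still_running_case_nat:
  "(\<Sum>t<Suc K. still_running n \<alpha> f x (case_nat r \<omega>) t) =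
     (if is_optimum n f x then 0 else 1 + (\<Sum>t<K. still_running n \<alpha> f (metro_step \<alpha> f x r) \<omega> t))"
proof -
  have all_le_Suc: "(\<forall>s\<le>Suc t. P s) \<longleftrightarrow> P 0 \<and> (\<forall>s\<le>t. P (Suc s))" for P t
    by (metis le_eq_less_or_eq less_Suc_eq_0_disj Suc_le_mono zero_le)
  have "still_running n \<alpha> f x (case_nat r \<omega>) (Suc t) =
      (if is_optimum n f x then 0 else still_running n \<alpha> f (metro_step \<alpha> f x r) \<omega> t)" for t
    unfolding still_running_def all_le_Suc metro_traj_case_nat by simp
  then show ?thesis
    unfolding sum.lessThan_Suc_shift by (simp add: still_running_def)
qed

lemma length_metro_step [simp]: "length (metro_step \<alpha> f x r) = length x"
  unfolding metro_step_def Let_def by simp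

context
  fixes n :: nat and \<alpha> :: real and f V :: "bool list \<Rightarrow> real"
  assumes n_pos: "n > 0" and \<alpha>_gt_1: "\<alpha> > 1" and V_nonneg: "\<And>y. 0 \<le> V y"
    and drift: "\<And>y. length y = n \<Longrightarrow> \<not> is_optimum n f y \<Longrightarrow>
      real n \<le> (\<Sum>i<n. accept_prob \<alpha> (f y) (f (flip_at y i)) * (V y - V (flip_at y i)))"
begin

lemma additive_drift_truncated:
  "length x = n \<Longrightarrow> (\<integral>\<^sup>+\<omega>. (\<Sum>t<K. still_running n \<alpha> f x \<omega> t) \<partial>step_sequences n) \<le> V x"
proof (induction K arbitrary: x)
  case 0
  then show ?case using V_nonneg by simp
next
  case (Suc K)
  interpret M: prob_space "step_measure n" by (rule prob_space_step_measure[OF n_pos])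
  interpret S: product_prob_space "\<lambda>_. step_measure n" "UNIV :: nat set" by unfold_locales
  have "(\<integral>\<^sup>+\<omega>. (\<Sum>t<Suc K. still_running n \<alpha> f x \<omega> t) \<partial>step_sequences n)
      = (\<integral>\<^sup>+r. \<integral>\<^sup>+\<omega>. (\<Sum>t<Suc K. still_running n \<alpha> f x (case_nat r \<omega>) t) \<partial>step_sequences n \<partial>step_measure n)"
    by (rule M.nn_integral_PiM_case_nat) simp
  also have "\<dots> \<le> V x"
  proof (cases "is_optimum n f x")
    case True
    then show ?thesis unfolding sum_still_running_case_nat by simp
  next
    case False
    have "(\<integral>\<^sup>+r. \<integral>\<^sup>+\<omega>. (\<Sum>t<Suc K. still_running n \<alpha> f x (case_nat r \<omega>) t) \<partial>step_sequences n \<partial>step_measure n)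
        = (\<integral>\<^sup>+r. 1 + (\<integral>\<^sup>+\<omega>. (\<Sum>t<K. still_running n \<alpha> f (metro_step \<alpha> f x r) \<omega> t) \<partial>step_sequences n) \<partial>step_measure n)"
      unfolding sum_still_running_case_nat using False
      by (intro nn_integral_cong) (simp add: nn_integral_add S.emeasure_space_1)
    also have "\<dots> \<le> (\<integral>\<^sup>+r. ennreal (1 + V (metro_step \<alpha> f x r)) \<partial>step_measure n)"
      using Suc V_nonneg by (intro nn_integral_mono) (simp add: ennreal_plus add_left_mono)
    also have "\<dots> = ennreal (V x + 1 - (\<Sum>i<n. accept_prob \<alpha> (f x) (f (flip_at x i)) * (V x - V (flip_at x i))) / n)"
      using nn_integral_metro_step[OF n_pos \<alpha>_gt_1, of "\<lambda>y. 1 + V y"] V_nonneg by (simp add: add.commute)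
    also have "\<dots> \<le> V x"
      using drift[OF Suc.prems False] n_pos by (intro ennreal_leI) (simp add: field_simps)
    finally show ?thesis .
  qed
  finally show ?case .
qed

lemma additive_drift:
  assumes "length x = n"
  shows "(\<integral>\<^sup>+\<omega>. (\<Sum>t. still_running n \<alpha> f x \<omega> t) \<partial>step_sequences n) \<le> V x"
proof -
  have "(\<integral>\<^sup>+\<omega>. (\<Sum>t. still_running n \<alpha> f x \<omega> t) \<partial>step_sequences n)
      = (\<Sum>t. \<integral>\<^sup>+\<omega>. still_running n \<alpha> f x \<omega> t \<partial>step_sequences n)"
    by (rule nn_integral_suminf) simp
  also have "\<dots> \<le> V x"
  proof (rule suminf_le_const[OF summableI])
    fix K
    have "(\<Sum>t<K. \<integral>\<^sup>+\<omega>. still_running n \<alpha> f x \<omega> t \<partial>step_sequences n)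
        = (\<integral>\<^sup>+\<omega>. (\<Sum>t<K. still_running n \<alpha> f x \<omega> t) \<partial>step_sequences n)"
      by (rule nn_integral_sum[symmetric]) simp
    also have "\<dots> \<le> V x" using assms by (rule additive_drift_truncated)
    finally show "(\<Sum>t<K. \<integral>\<^sup>+\<omega>. still_running n \<alpha> f x \<omega> t \<partial>step_sequences n) \<le> V x" .
  qed
  finally show ?thesis .
qed

lemma expected_runtime_le_average_potential:
  "expected_runtime n \<alpha> f
     \<le> ennreal (1 + (\<Sum>x\<in>{xs. length xs = n}. V x) / card {xs :: bool list. length xs = n})"
proof -
  define L where "L = {xs :: bool list. length xs = n}"
  have "finite L" unfolding L_def using finite_lists_length_eq[of "UNIV :: bool set" n] by simp
  moreover have "card L > 0" unfolding L_def using card_lists_length_eq[of "UNIV :: bool set" n] by simp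
  ultimately have L: "finite L" "card L > 0" .
  interpret M: prob_space "step_measure n" by (rule prob_space_step_measure[OF n_pos])
  interpret S: prob_space "step_sequences n" by (rule prob_space_PiM) (rule M.prob_space_axioms)
  have start: "(\<integral>\<^sup>+\<omega>. 1 + (\<Sum>t. still_running n \<alpha> f x \<omega> t) \<partial>step_sequences n) \<le> ennreal (1 + V x)"
    if "x \<in> L" for x
  proof -
    have "(\<integral>\<^sup>+\<omega>. 1 + (\<Sum>t. still_running n \<alpha> f x \<omega> t) \<partial>step_sequences n)
        = 1 + (\<integral>\<^sup>+\<omega>. (\<Sum>t. still_running n \<alpha> f x \<omega> t) \<partial>step_sequences n)"
      by (subst nn_integral_add) (auto simp: S.emeasure_space_1)
    also have "\<dots> \<le> 1 + ennreal (V x)"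
      using additive_drift that unfolding L_def by (simp add: add_left_mono)
    finally show ?thesis using V_nonneg by (simp add: ennreal_plus)
  qed
  have "expected_runtime n \<alpha> f
      \<le> (\<integral>\<^sup>+(x, \<omega>). 1 + (\<Sum>t. still_running n \<alpha> f x \<omega> t) \<partial>metro_space n)"
    unfolding expected_runtime_def case_prod_beta by (intro nn_integral_mono metro_runtime_le_still_running)
  also have "\<dots> = (\<integral>\<^sup>+x. \<integral>\<^sup>+\<omega>. 1 + (\<Sum>t. still_running n \<alpha> f x \<omega> t) \<partial>step_sequences n \<partial>pmf_of_set L)"
    unfolding metro_space_eq_step_sequences L_def[symmetric]
    by (subst S.nn_integral_fst[symmetric]) (auto intro: measurable_pmf_pair_countable)
  also have "\<dots> = (\<Sum>x\<in>L. \<integral>\<^sup>+\<omega>. 1 + (\<Sum>t. still_running n \<alpha> f x \<omega> t) \<partial>step_sequences n) / card L"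
    using L by (subst nn_integral_pmf_of_set) auto
  also have "\<dots> \<le> (\<Sum>x\<in>L. ennreal (1 + V x)) / card L"
    by (intro divide_right_mono_ennreal sum_mono start)
  also have "\<dots> = ennreal (\<Sum>x\<in>L. 1 + V x) / ennreal (real (card L))"
    using V_nonneg by (subst sum_ennreal) (auto simp: add_nonneg_nonneg ennreal_of_nat_eq_real_of_nat)
  also have "\<dots> = ennreal ((\<Sum>x\<in>L. 1 + V x) / card L)"
    using L V_nonneg by (intro divide_ennreal) (auto intro: sum_nonneg add_nonneg_nonneg)
  also have "(\<Sum>x\<in>L. 1 + V x) / card L = 1 + (\<Sum>x\<in>L. V x) / card L"
    using L by (simp add: sum.distrib add_divide_distrib card_gt_0_iff)
  finally show ?thesis unfolding L_def .
qed

end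

lemma potential_DLB_ge_half:
  assumes "n > 0" "x ! 0"
  shows "1/2 \<le> potential n (DLB n x)"
proof (cases "DLB n x = n")
  case True
  then show ?thesis using assms(1) by (simp add: potential_def)
next
  case False
  then obtain m where m: "m < n div 2" "critical_block x m" by (rule obtain_critical_block)
  show ?thesis
  proof (cases "m = 0")
    case True
    then have "DLB n x = 0" using DLB_critical_block[OF m] assms(2) by simp
    then show ?thesis using assms(1) by (simp add: potential_def)
  next
    case False
    then have "2 \<le> DLB n x"
      using DLB_ge_prefix[of m n x] m unfolding critical_block_def by simp
    then have "real 2 \<le> potential n (DLB n x)" by (intro potential_ge_even DLB_le) auto
    then show ?thesis by simp
  qed
qed

lemma sum_potential_DLB_ge:
  assumes "n > 0"
  shows "card {xs :: bool list. length xs = n} / 4 \<le> (\<Sum>x\<in>{xs. length xs = n}. potential n (DLB n x))"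
proof -
  define L where "L = {xs :: bool list. length xs = n}"
  have "(\<Sum>x\<in>L. potential n (DLB n (flip_at x 0))) = (\<Sum>x\<in>L. potential n (DLB n x))"
    by (rule sum.reindex_bij_witness[where i="\<lambda>x. flip_at x 0" and j="\<lambda>x. flip_at x 0"])
       (auto simp: L_def)
  moreover have "1/2 \<le> potential n (DLB n x) + potential n (DLB n (flip_at x 0))" if "x \<in> L" for x
  proof -
    have "x ! 0 \<or> flip_at x 0 ! 0" using that assms by (auto simp: L_def nth_flip_at)
    then show ?thesis
      using potential_DLB_ge_half[OF assms] potential_nonneg[OF DLB_le] by (smt (verit))
  qed
  then have "(\<Sum>x\<in>L. 1/2) \<le> (\<Sum>x\<in>L. potential n (DLB n x) + potential n (DLB n (flip_at x 0)))"
    by (rule sum_mono)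
  ultimately show ?thesis unfolding L_def[symmetric] by (simp add: sum.distrib)
qed

lemma average_DLB_runtime_bound:
  fixes C :: real
  assumes "n > 0" "0 < C" "4 * C \<le> n"
  shows "1 + (\<Sum>x\<in>{xs. length xs = n}. real n * (real n - potential n (DLB n x)) / C)
               / card {xs :: bool list. length xs = n}
         \<le> real n ^ 2 / C"
proof -
  define L where "L = {xs :: bool list. length xs = n}"
  define P where "P = (\<Sum>x\<in>L. potential n (DLB n x))"
  have c: "0 < card L" unfolding L_def using card_lists_length_eq[of "UNIV :: bool set" n] by simp
  have "card L / 4 \<le> P" unfolding P_def L_def by (rule sum_potential_DLB_ge[OF assms(1)])
  then have "C * card L \<le> real n * P" using mult_mono[OF assms(3), of "real (card L) / 4" P] by simp
  then have le: "1 \<le> real n * P / (C * card L)" using c assms(2) by (simp add: le_divide_eq)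
  have "(\<Sum>x\<in>L. real n * (real n - potential n (DLB n x)) / C) = real n * (card L * n - P) / C"
    unfolding P_def by (simp add: sum_divide_distrib[symmetric] sum_distrib_left[symmetric] sum_subtractf)
  also have "\<dots> / card L = real n ^ 2 / C - real n * P / (C * card L)"
    using c assms(2) by (simp add: field_simps power2_eq_square)
  finally show ?thesis using le unfolding L_def by linarith
qed

lemma scaled_potential_drift:
  fixes n :: nat and \<alpha> :: real
  defines "V \<equiv> \<lambda>x. real n * (real n - potential n (DLB n x)) / C_const \<alpha>"
  assumes "\<alpha> > sqrt 2 + 1" "length y = n" "\<not> is_optimum n (\<lambda>x. real (DLB n x)) y"
  shows "real n \<le> (\<Sum>i<n. accept_prob \<alpha> (real (DLB n y)) (real (DLB n (flip_at y i))) * (V y - V (flip_at y i)))"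
proof -
  have "DLB n y \<noteq> n" using assms(3,4) is_optimum_DLB_iff by blast
  then obtain m where "m < n div 2" "critical_block y m" by (rule obtain_critical_block)
  then have "C_const \<alpha> \<le> (\<Sum>i<n. potential_gain \<alpha> n (DLB n y) (DLB n (flip_at y i)))"
    using C_const_le_potential_drift[OF assms(3)] assms(2) by blast
  then have "real n * C_const \<alpha> / C_const \<alpha>
      \<le> real n * (\<Sum>i<n. potential_gain \<alpha> n (DLB n y) (DLB n (flip_at y i))) / C_const \<alpha>"
    using C_const_pos[OF assms(2)] by (intro divide_right_mono mult_left_mono) auto
  also have "\<dots> = (\<Sum>i<n. accept_prob \<alpha> (real (DLB n y)) (real (DLB n (flip_at y i))) * (V y - V (flip_at y i)))"
    unfolding V_def potential_gain_def
    by (simp add: sum_distrib_left sum_divide_distrib algebra_simps diff_divide_distrib)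
  finally show ?thesis using C_const_pos[OF assms(2)] by simp
qed

theorem theorem13:
  fixes n :: nat and \<alpha> :: real
  assumes "even n" and "n > 0" and "\<alpha> > sqrt 2 + 1"
  shows "expected_runtime n \<alpha> (\<lambda>x. real (DLB n x)) \<le> ennreal (real n ^ 2 / C_const \<alpha>)"
proof -
  define V where "V x = real n * (real n - potential n (DLB n x)) / C_const \<alpha>" for x
  have "1 < sqrt 2" by simp
  then have \<alpha>: "\<alpha> > 2" "\<alpha> > 1" using assms(3) by linarith+
  have C: "0 < C_const \<alpha>" "C_const \<alpha> \<le> 1 / \<alpha>"
    using C_const_pos[OF assms(3)] C_const_le_inverse[OF \<alpha>(2)] .
  have "1 / \<alpha> < 1 / 2" using \<alpha>(1) by (simp add: field_simps)
  moreover have "2 \<le> n" using assms(1,2) by presburger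
  ultimately have C4: "4 * C_const \<alpha> \<le> n" using C by linarith
  have "0 \<le> V y" for y
    unfolding V_def using C potential_le[OF DLB_le] by simp
  with scaled_potential_drift[OF assms(3)]
  have "expected_runtime n \<alpha> (\<lambda>x. real (DLB n x))
      \<le> ennreal (1 + (\<Sum>x\<in>{xs. length xs = n}. V x) / card {xs :: bool list. length xs = n})"
    by (intro expected_runtime_le_average_potential[OF assms(2) \<alpha>(2)]) (auto simp: V_def)
  also have "\<dots> \<le> ennreal (real n ^ 2 / C_const \<alpha>)"
    unfolding V_def using average_DLB_runtime_bound[OF assms(2) C(1) C4] by (rule ennreal_leI)
  finally show ?thesis .
qed

end
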